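(* Let $d$ be a positive integer and let $p\in(0,1]$. Asymptotically almost surely as $n\to\infty$, the diameter of the random-surfer Webgraph model with $n$ vertices and parameters $p$ and $d$ is at most $8e^p(\log n)/p$.
   Context: For $p\in(0,1]$, $\mathrm{Geo}(p)$ denotes a geometric random variable with $\Pr[\mathrm{Geo}(p)=k]=(1-p)^kp$ for every integer $k\ge 0$. The random-surfer Webgraph model with parameters $d$ and $p$ is the random directed rooted $n$-vertex multigraph generated as follows: start with a single vertex $v_0$ (the root) with $d$ self-loops; at each step $s$, $1\le s\le n-1$, a new vertex $v_s$ appears and $d$ edges are created from $v_s$ to vertices in $\{v_0,\dots,v_{s-1}\}$ by performing the following procedure $d$ times independently: choose a vertex $u$ uniformly at random from $\{v_0,\dots,v_{s-1}\}$ and a fresh random variable $X=\mathrm{Geo}(p)$, perform a simple random walk of length $X$ starting from $u$ (following out-edges, choosing uniformly among out-edges counted with multiplicity), and join $v_s$ to the last vertex of the walk. The diameter of a directed graph is the maximum shortest-path distance between two vertices in its underlying undirected graph. "Asymptotically almost surely" (a.a.s.) means with probability tending to $1$ as $n\to\infty$. $\log$ is the natural logarithm. *)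

theory Defs
  imports "HOL-Probability.Probability"
begin

text \<open>A directed rooted multigraph on vertices 0..length G - 1 is represented as a list
  G of out-neighbour lists: G ! v is the list (with multiplicity) of heads of the
  out-edges of vertex v.\<close>

definition walk_step :: "nat list list \<Rightarrow> nat \<Rightarrow> nat pmf" where
  "walk_step G u = map_pmf (\<lambda>j. G ! u ! j) (pmf_of_set {..<length (G ! u)})"

fun walk_end :: "nat list list \<Rightarrow> nat \<Rightarrow> nat \<Rightarrow> nat pmf" where
  "walk_end G u 0 = return_pmf u"
| "walk_end G u (Suc k) = bind_pmf (walk_step G u) (\<lambda>w. walk_end G w k)"

definition surfer_target :: "real \<Rightarrow> nat list list \<Rightarrow> nat pmf" where
  "surfer_target p G =
     bind_pmf (pmf_of_set {..<length G}) (\<lambda>u.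
     bind_pmf (geometric_pmf p) (\<lambda>X. walk_end G u X))"

fun iid_list :: "nat \<Rightarrow> 'a pmf \<Rightarrow> 'a list pmf" where
  "iid_list 0 D = return_pmf []"
| "iid_list (Suc k) D = bind_pmf D (\<lambda>x. bind_pmf (iid_list k D) (\<lambda>xs. return_pmf (x # xs)))"

text \<open>webgraph_steps d p s: the graph after s steps, i.e. with s+1 vertices.\<close>
fun webgraph_steps :: "nat \<Rightarrow> real \<Rightarrow> nat \<Rightarrow> nat list list pmf" where
  "webgraph_steps d p 0 = return_pmf [replicate d 0]"
| "webgraph_steps d p (Suc s) =
     bind_pmf (webgraph_steps d p s) (\<lambda>G.
     bind_pmf (iid_list d (surfer_target p G)) (\<lambda>es. return_pmf (G @ [es])))"

definition webgraph :: "nat \<Rightarrow> real \<Rightarrow> nat \<Rightarrow> nat list list pmf" where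
  "webgraph d p n = webgraph_steps d p (n - 1)"

definition uedges :: "nat list list \<Rightarrow> (nat \<times> nat) set" where
  "uedges G = {(a, b). a < length G \<and> b < length G \<and>
                       (b \<in> set (G ! a) \<or> a \<in> set (G ! b))}"

definition udist :: "nat list list \<Rightarrow> nat \<Rightarrow> nat \<Rightarrow> nat" where
  "udist G a b = (LEAST k. (a, b) \<in> uedges G ^^ k)"

definition diameter :: "nat list list \<Rightarrow> nat" where
  "diameter G = Max {udist G a b | a b. a < length G \<and> b < length G}"

end

theory Submission
  imports Defs
begin

text \<open>Every new vertex points to an older one, so all vertices are joined to the root and
  the diameter is at most twice the largest depth (distance to the root). For
  z = 2/(2 - p) consider the potential \<Phi>(G), the sum of z^depth(v) over all vertices v.
  A new vertex hangs below the endpoint of a random walk of geometric length started at a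
  uniform vertex; since a walk step raises the depth by at most one, the expected value of
  z^depth of that endpoint is at most E[z^Geo(p)] \<Phi>(G)/s = (2 - p) \<Phi>(G)/s on s
  vertices, so E[\<Phi>] grows by the factor 1 + 2/s per step and E[\<Phi>] \<le> n(n + 1)/2
  at the end. Since ln z \<ge> p/2, Markov's inequality bounds the probability that some
  vertex has depth above 4 e^p ln n / p by n^(2 - 2e^p), which tends to 0.\<close>

definition is_webgraph :: "nat \<Rightarrow> nat list list \<Rightarrow> bool" where
  "is_webgraph d G \<longleftrightarrow> length G \<ge> 1 \<and> (\<forall>v<length G. length (G!v) = d \<and>
      (\<forall>w\<in>set (G!v). w < length G \<and> (v > 0 \<longrightarrow> w < v)))"

abbreviation depth :: "nat list list \<Rightarrow> nat \<Rightarrow> nat" where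
  "depth G v \<equiv> udist G v 0"

subsection \<open>Distances in the underlying undirected graph\<close>

lemma udist_le: "(a, b) \<in> uedges G ^^ k \<Longrightarrow> udist G a b \<le> k"
  unfolding udist_def by (rule Least_le)

lemma udist_relpow: "\<exists>j. (a, b) \<in> uedges G ^^ j \<Longrightarrow> (a, b) \<in> uedges G ^^ udist G a b"
  unfolding udist_def by (rule LeastI_ex)

lemma relpow_mono: "(R :: ('a \<times> 'a) set) \<subseteq> S \<Longrightarrow> R ^^ n \<subseteq> S ^^ n"
  by (induction n) (simp_all add: relcomp_mono relpow.simps)

lemma sym_relpow: "sym (R :: ('a \<times> 'a) set) \<Longrightarrow> sym (R ^^ n)"
proof (induction n)
  case (Suc n)
  show ?case
  proof (rule symI)
    fix x z assume "(x, z) \<in> R ^^ Suc n"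
    then obtain y where "(x, y) \<in> R ^^ n" "(y, z) \<in> R" by auto
    then have "(z, y) \<in> R" "(y, x) \<in> R ^^ n" using Suc by (auto dest: symD)
    then show "(z, x) \<in> R ^^ Suc n" by (rule relpow_Suc_I2)
  qed
qed (simp add: sym_Id)

lemma sym_uedges: "sym (uedges G)"
  by (auto simp: uedges_def intro: symI)

lemma uedges_append_mono: "uedges G \<subseteq> uedges (G @ [es])"
  by (auto simp: uedges_def nth_append)

lemma is_webgraph_reaches_root:
  assumes "is_webgraph d G" "0 < d" "v < length G"
  shows "\<exists>j. (v, 0) \<in> uedges G ^^ j"
  using assms(3)
proof (induction v rule: less_induct)
  case (less v)
  show ?case
  proof (cases "v = 0")
    case True
    then show ?thesis by (intro exI[of _ 0]) auto
  next
    case False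
    have w: "G!v!0 \<in> set (G!v)" using assms(1,2) less.prems by (auto simp: is_webgraph_def)
    then have "G!v!0 < v" "G!v!0 < length G"
      using assms(1) less.prems False by (auto simp: is_webgraph_def)
    then obtain j where "(G!v!0, 0) \<in> uedges G ^^ j" using less.IH by blast
    moreover have "(v, G!v!0) \<in> uedges G" using w \<open>G!v!0 < length G\<close> less.prems
      by (auto simp: uedges_def)
    ultimately show ?thesis by (blast intro: relpow_Suc_I2)
  qed
qed

lemma depth_relpow:
  "is_webgraph d G \<Longrightarrow> 0 < d \<Longrightarrow> v < length G \<Longrightarrow> (v, 0) \<in> uedges G ^^ depth G v"
  by (rule udist_relpow, rule is_webgraph_reaches_root)

lemma depth_append_le:
  assumes "is_webgraph d G" "0 < d" "v < length G"
  shows "depth (G @ [es]) v \<le> depth G v"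
  using depth_relpow[OF assms] relpow_mono[OF uedges_append_mono] by (intro udist_le) blast

lemma depth_append_new_le:
  assumes "is_webgraph d G" "0 < d" "es \<noteq> []" "es!0 < length G"
  shows "depth (G @ [es]) (length G) \<le> Suc (depth G (es!0))"
proof -
  have "(es!0, 0) \<in> uedges (G @ [es]) ^^ depth G (es!0)"
    using depth_relpow[OF assms(1,2,4)] relpow_mono[OF uedges_append_mono] by blast
  moreover have "(length G, es!0) \<in> uedges (G @ [es])"
    using assms(3,4) by (auto simp: uedges_def nth_append)
  ultimately show ?thesis by (intro udist_le relpow_Suc_I2)
qed

lemma diameter_le_twice_depth:
  assumes "is_webgraph d G" "0 < d" "\<And>v. v < length G \<Longrightarrow> real (depth G v) \<le> R"
  shows "real (diameter G) \<le> 2 * R"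
proof -
  let ?S = "{udist G a b | a b. a < length G \<and> b < length G}"
  have "?S = (\<lambda>(a, b). udist G a b) ` ({..<length G} \<times> {..<length G})" by auto
  then have "finite ?S" by simp
  moreover have "0 < length G" using assms(1) unfolding is_webgraph_def by linarith
  then have "udist G 0 0 \<in> ?S" by blast
  ultimately have "diameter G \<in> ?S" unfolding diameter_def by (intro Max_in) auto
  then obtain a b where ab: "a < length G" "b < length G" "diameter G = udist G a b"
    by blast
  have "(b, 0) \<in> uedges G ^^ depth G b" by (rule depth_relpow[OF assms(1,2) ab(2)])
  then have "(0, b) \<in> uedges G ^^ depth G b"
    by (rule symD[OF sym_relpow[OF sym_uedges]])
  then have "(a, b) \<in> uedges G ^^ (depth G a + depth G b)"
    by (rule relpow_trans[OF depth_relpow[OF assms(1,2) ab(1)]])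
  then have "diameter G \<le> depth G a + depth G b" unfolding ab(3) by (rule udist_le)
  then show ?thesis using assms(3)[OF ab(1)] assms(3)[OF ab(2)] by linarith
qed

subsection \<open>Supports of the random choices\<close>

lemma set_pmf_walk_step:
  assumes "G!u \<noteq> []"
  shows "set_pmf (walk_step G u) = set (G!u)"
proof -
  have "set_pmf (pmf_of_set {..<length (G!u)}) = {..<length (G!u)}"
    using assms by (intro set_pmf_of_set) auto
  then show ?thesis by (auto simp: walk_step_def set_conv_nth)
qed

lemma walk_end_depth_le:
  assumes "is_webgraph d G" "0 < d" "u < length G" "t \<in> set_pmf (walk_end G u X)"
  shows "t < length G \<and> depth G t \<le> X + depth G u"
  using assms(3,4)
proof (induction X arbitrary: u)
  case (Suc k)
  have "G!u \<noteq> []" using assms(1,2) Suc.prems by (auto simp: is_webgraph_def)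
  with Suc.prems obtain w where w: "w \<in> set (G!u)" and t: "t \<in> set_pmf (walk_end G w k)"
    by (auto simp: set_pmf_walk_step)
  have "w < length G" using w assms(1) Suc.prems by (auto simp: is_webgraph_def)
  with Suc.IH t have IH: "t < length G" "depth G t \<le> k + depth G w" by auto
  have "(w, u) \<in> uedges G" using w \<open>w < length G\<close> Suc.prems by (auto simp: uedges_def)
  then have "(w, 0) \<in> uedges G ^^ Suc (depth G u)"
    using depth_relpow[OF assms(1,2) Suc.prems(1)] by (rule relpow_Suc_I2)
  then have "depth G w \<le> Suc (depth G u)" by (rule udist_le)
  with IH show ?case by simp
qed simp

lemma set_pmf_surfer_target:
  assumes "is_webgraph d G" "0 < d" "x \<in> set_pmf (surfer_target p G)"
  shows "x < length G"
proof -
  have "0 < length G" using assms(1) unfolding is_webgraph_def by linarith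
  then have "{..<length G} \<noteq> {}" by auto
  with assms(3) obtain u X where "u < length G" "x \<in> set_pmf (walk_end G u X)"
    by (auto simp: surfer_target_def)
  then show ?thesis using walk_end_depth_le[OF assms(1,2)] by blast
qed

lemma set_pmf_iid_list: "es \<in> set_pmf (iid_list k D) \<Longrightarrow> length es = k \<and> set es \<subseteq> set_pmf D"
  by (induction k arbitrary: es) fastforce+

lemma is_webgraph_append:
  assumes "is_webgraph d G" "length es = d" "\<And>x. x \<in> set es \<Longrightarrow> x < length G"
  shows "is_webgraph d (G @ [es])"
  unfolding is_webgraph_def
proof (intro conjI allI impI)
  fix v assume v: "v < length (G @ [es])"
  show "length ((G @ [es]) ! v) = d"
    using assms v by (cases "v < length G") (auto simp: is_webgraph_def nth_append)
  show "\<forall>w\<in>set ((G @ [es]) ! v). w < length (G @ [es]) \<and> (0 < v \<longrightarrow> w < v)"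
  proof (cases "v < length G")
    case True
    with assms(1) have "\<forall>w\<in>set (G ! v). w < length G \<and> (0 < v \<longrightarrow> w < v)"
      unfolding is_webgraph_def by blast
    with True show ?thesis by (auto simp: nth_append)
  next
    case False
    with v have "v = length G" by simp
    then show ?thesis by (auto simp: nth_append dest!: assms(3))
  qed
qed simp

lemma is_webgraph_webgraph_steps:
  assumes "0 < d" "G \<in> set_pmf (webgraph_steps d p s)"
  shows "is_webgraph d G \<and> length G = Suc s"
  using assms(2)
proof (induction s arbitrary: G)
  case 0
  then show ?case by (auto simp: is_webgraph_def)
next
  case (Suc s)
  then obtain H es where H: "H \<in> set_pmf (webgraph_steps d p s)"
    and es: "es \<in> set_pmf (iid_list d (surfer_target p H))" and G: "G = H @ [es]" by auto
  from Suc.IH[OF H] have "is_webgraph d H" "length H = Suc s" by auto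
  with set_pmf_iid_list[OF es] set_pmf_surfer_target[OF _ assms(1)] show ?case
    unfolding G by (auto intro!: is_webgraph_append)
qed

subsection \<open>The potential\<close>

definition root_potential :: "real \<Rightarrow> nat list list \<Rightarrow> real" where
  "root_potential z G = (\<Sum>v<length G. z ^ depth G v)"

lemma root_potential_nonneg: "0 \<le> z \<Longrightarrow> 0 \<le> root_potential z G"
  by (auto simp: root_potential_def intro!: sum_nonneg)

lemma root_potential_append_le:
  assumes "is_webgraph d G" "0 < d" "1 \<le> z" "es \<noteq> []" "es!0 < length G"
  shows "root_potential z (G @ [es]) \<le> root_potential z G + z * z ^ depth G (es!0)"
proof -
  have "(\<Sum>v<length G. z ^ depth (G @ [es]) v) \<le> root_potential z G"
    unfolding root_potential_def using depth_append_le[OF assms(1,2)] assms(3)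
    by (intro sum_mono power_increasing) auto
  moreover have "z ^ depth (G @ [es]) (length G) \<le> z ^ Suc (depth G (es!0))"
    using depth_append_new_le[OF assms(1,2,4,5)] assms(3) by (intro power_increasing) auto
  ultimately show ?thesis by (simp add: root_potential_def)
qed

lemma nn_integral_iid_list_hd:
  "(\<integral>\<^sup>+es. f (es!0) \<partial>measure_pmf (iid_list (Suc k) D)) = (\<integral>\<^sup>+x. f x \<partial>measure_pmf D)"
  by (simp add: measure_pmf.emeasure_space_1)

lemma geometric_pmf_moment:
  assumes "0 < p" "p \<le> 1" "0 \<le> z" "(1 - p) * z < 1"
  shows "(\<integral>\<^sup>+X. ennreal (z ^ X) \<partial>measure_pmf (geometric_pmf p)) = ennreal (p / (1 - (1 - p) * z))"
proof -
  have "(\<lambda>X. p * ((1 - p) * z) ^ X) sums (p * (1 / (1 - (1 - p) * z)))"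
    using assms by (intro sums_mult geometric_sums) simp
  then have sums: "(\<lambda>X. (1 - p) ^ X * p * z ^ X) sums (p / (1 - (1 - p) * z))"
    by (simp add: power_mult_distrib mult_ac)
  have "(\<integral>\<^sup>+X. ennreal (z ^ X) \<partial>measure_pmf (geometric_pmf p)) =
        (\<Sum>X. ennreal ((1 - p) ^ X * p * z ^ X))"
    using assms by (simp add: nn_integral_measure_pmf nn_integral_count_space_nat ennreal_mult
        mult_ac)
  also have "\<dots> = ennreal (p / (1 - (1 - p) * z))"
    using sums assms by (intro suminf_ennreal_eq) auto
  finally show ?thesis .
qed

lemma nn_integral_walk_end_le:
  assumes "is_webgraph d G" "0 < d" "u < length G" "1 \<le> z"
  shows "(\<integral>\<^sup>+t. ennreal (z ^ depth G t) \<partial>measure_pmf (walk_end G u X))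
           \<le> ennreal (z ^ depth G u) * ennreal (z ^ X)"
proof -
  have "ennreal (z ^ depth G t) \<le> ennreal (z ^ depth G u) * ennreal (z ^ X)"
    if "t \<in> set_pmf (walk_end G u X)" for t
  proof -
    have "depth G t \<le> X + depth G u" using walk_end_depth_le[OF assms(1-3) that] by simp
    then have "z ^ depth G t \<le> z ^ (X + depth G u)" using assms(4) by (intro power_increasing) auto
    then have "ennreal (z ^ depth G t) \<le> ennreal (z ^ depth G u * z ^ X)"
      by (intro ennreal_leI) (simp add: power_add mult_ac)
    then show ?thesis using assms(4) by (simp add: ennreal_mult)
  qed
  then have "(\<integral>\<^sup>+t. ennreal (z ^ depth G t) \<partial>measure_pmf (walk_end G u X))
      \<le> (\<integral>\<^sup>+t. ennreal (z ^ depth G u) * ennreal (z ^ X) \<partial>measure_pmf (walk_end G u X))"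
    by (intro nn_integral_mono_AE) (auto simp: AE_measure_pmf_iff)
  then show ?thesis by (simp add: measure_pmf.emeasure_space_1)
qed

lemma surfer_target_moment:
  assumes G: "is_webgraph d G" "0 < d" and p: "0 < p" "p \<le> 1" and z: "1 \<le> z" "(1 - p) * z < 1"
  shows "(\<integral>\<^sup>+x. ennreal (z ^ depth G x) \<partial>measure_pmf (surfer_target p G))
          \<le> ennreal (p / (1 - (1 - p) * z) / length G * root_potential z G)"
proof -
  let ?n = "length G" and ?m = "p / (1 - (1 - p) * z)"
  have "0 < ?n" using G(1) unfolding is_webgraph_def by linarith
  then have ne: "{..<?n} \<noteq> {}" by auto
  have m: "0 \<le> ?m" using p z by simp
  have terms: "0 \<le> ?m * z ^ depth G u" for u
    using m z by (intro mult_nonneg_nonneg zero_le_power) auto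
  have walk: "(\<integral>\<^sup>+X. \<integral>\<^sup>+t. ennreal (z ^ depth G t) \<partial>measure_pmf (walk_end G u X)
      \<partial>measure_pmf (geometric_pmf p)) \<le> ennreal (?m * z ^ depth G u)" if "u < ?n" for u
  proof -
    have "(\<integral>\<^sup>+X. \<integral>\<^sup>+t. ennreal (z ^ depth G t) \<partial>measure_pmf (walk_end G u X)
        \<partial>measure_pmf (geometric_pmf p))
        \<le> (\<integral>\<^sup>+X. ennreal (z ^ depth G u) * ennreal (z ^ X) \<partial>measure_pmf (geometric_pmf p))"
      by (intro nn_integral_mono nn_integral_walk_end_le[OF G that z(1)])
    also have "\<dots> = ennreal (z ^ depth G u) * ennreal ?m"
      using geometric_pmf_moment[OF p _ z(2)] z(1) by (simp add: nn_integral_cmult)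
    also have "\<dots> = ennreal (?m * z ^ depth G u)"
      using m z by (subst ennreal_mult[symmetric]) (auto simp: mult.commute)
    finally show ?thesis .
  qed
  have "(\<integral>\<^sup>+x. ennreal (z ^ depth G x) \<partial>measure_pmf (surfer_target p G))
      = (\<integral>\<^sup>+u. (\<integral>\<^sup>+X. \<integral>\<^sup>+t. ennreal (z ^ depth G t) \<partial>measure_pmf (walk_end G u X)
           \<partial>measure_pmf (geometric_pmf p)) \<partial>measure_pmf (pmf_of_set {..<?n}))"
    by (simp add: surfer_target_def)
  also have "\<dots> \<le> (\<integral>\<^sup>+u. ennreal (?m * z ^ depth G u) \<partial>measure_pmf (pmf_of_set {..<?n}))"
    using walk ne by (intro nn_integral_mono_AE) (auto simp: AE_measure_pmf_iff)
  also have "\<dots> = (\<Sum>u<?n. ennreal (?m * z ^ depth G u)) / ?n"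
    using ne by (simp add: nn_integral_pmf_of_set)
  also have "\<dots> = ennreal ((\<Sum>u<?n. ?m * z ^ depth G u) / ?n)"
  proof -
    have "0 \<le> (\<Sum>u<?n. ?m * z ^ depth G u)" using terms by (intro sum_nonneg)
    moreover have "(\<Sum>u<?n. ennreal (?m * z ^ depth G u)) = ennreal (\<Sum>u<?n. ?m * z ^ depth G u)"
      using terms by (intro sum_ennreal)
    ultimately show ?thesis using \<open>0 < ?n\<close>
      by (simp only: ennreal_of_nat_eq_real_of_nat divide_ennreal of_nat_0_less_iff)
  qed
  also have "\<dots> = ennreal (?m / ?n * root_potential z G)"
    by (simp add: root_potential_def sum_distrib_left sum_divide_distrib)
  finally show ?thesis .
qed

lemma nn_integral_root_potential_append:
  assumes G: "is_webgraph d G" "0 < d" and p: "0 < p" "p \<le> 1" and z: "1 \<le> z" "(1 - p) * z < 1"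
  shows "(\<integral>\<^sup>+es. ennreal (root_potential z (G @ [es])) \<partial>measure_pmf (iid_list d (surfer_target p G)))
          \<le> ennreal ((1 + z * (p / (1 - (1 - p) * z)) / length G) * root_potential z G)"
proof -
  let ?\<Phi> = "root_potential z G" and ?m = "p / (1 - (1 - p) * z)"
  let ?E = "iid_list d (surfer_target p G)"
  obtain k where k: "d = Suc k" using G(2) by (cases d) auto
  have \<Phi>: "0 \<le> ?\<Phi>" using z by (simp add: root_potential_nonneg)
  have m: "0 \<le> ?m / length G * ?\<Phi>" using p z \<Phi> by simp
  have zm: "0 \<le> z * (?m / length G * ?\<Phi>)" using z by (intro mult_nonneg_nonneg[OF _ m]) simp
  have "(\<integral>\<^sup>+es. ennreal (root_potential z (G @ [es])) \<partial>measure_pmf ?E)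
     \<le> (\<integral>\<^sup>+es. ennreal ?\<Phi> + ennreal z * ennreal (z ^ depth G (es!0)) \<partial>measure_pmf ?E)"
  proof (intro nn_integral_mono_AE, unfold AE_measure_pmf_iff, intro ballI)
    fix es assume "es \<in> set_pmf ?E"
    then have "length es = d" "set es \<subseteq> set_pmf (surfer_target p G)"
      by (auto dest: set_pmf_iid_list)
    then have "es \<noteq> []" "es!0 \<in> set_pmf (surfer_target p G)"
      using G(2) nth_mem[of 0 es] by auto
    with set_pmf_surfer_target[OF G] have "es!0 < length G" by blast
    from root_potential_append_le[OF G z(1) \<open>es \<noteq> []\<close> this] \<Phi> z
    show "ennreal (root_potential z (G @ [es])) \<le> ennreal ?\<Phi> + ennreal z * ennreal (z ^ depth G (es!0))"
      by (simp add: ennreal_mult'[symmetric] ennreal_plus[symmetric] del: ennreal_plus)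
  qed
  also have "\<dots> = ennreal ?\<Phi> + ennreal z * (\<integral>\<^sup>+es. ennreal (z ^ depth G (es!0)) \<partial>measure_pmf ?E)"
    by (simp add: nn_integral_add nn_integral_cmult measure_pmf.emeasure_space_1)
  also have "\<dots> = ennreal ?\<Phi> + ennreal z * (\<integral>\<^sup>+x. ennreal (z ^ depth G x) \<partial>measure_pmf (surfer_target p G))"
    unfolding k using nn_integral_iid_list_hd[where f = "\<lambda>x. ennreal (z ^ depth G x)"] by simp
  also have "\<dots> \<le> ennreal ?\<Phi> + ennreal z * ennreal (?m / length G * ?\<Phi>)"
    by (intro add_mono mult_left_mono surfer_target_moment[OF G p z]) auto
  also have "\<dots> = ennreal (?\<Phi> + z * (?m / length G * ?\<Phi>))"
    using \<Phi> m zm z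
    by (simp only: ennreal_mult[symmetric] ennreal_plus[symmetric] order_trans[OF zero_le_one])
  also have "?\<Phi> + z * (?m / length G * ?\<Phi>) = (1 + z * ?m / length G) * ?\<Phi>"
    by (simp add: algebra_simps)
  finally show ?thesis .
qed

lemma nn_integral_root_potential_webgraph_steps_Suc:
  assumes "0 < d" "0 < p" "p \<le> 1"
  defines "z \<equiv> 2 / (2 - p)"
  shows "(\<integral>\<^sup>+G. ennreal (root_potential z G) \<partial>measure_pmf (webgraph_steps d p (Suc s)))
    \<le> ennreal (1 + 2 / (real s + 1)) *
      (\<integral>\<^sup>+G. ennreal (root_potential z G) \<partial>measure_pmf (webgraph_steps d p s))"
proof -
  have "1 - (1 - p) * z = p / (2 - p)" using assms(3) by (simp add: z_def field_simps)
  then have z: "1 \<le> z" "(1 - p) * z < 1" "z * (p / (1 - (1 - p) * z)) = 2"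
    using assms(2,3) by (auto simp: z_def field_simps)
  have "(\<integral>\<^sup>+G. ennreal (root_potential z G) \<partial>measure_pmf (webgraph_steps d p (Suc s)))
      = (\<integral>\<^sup>+H. (\<integral>\<^sup>+es. ennreal (root_potential z (H @ [es]))
          \<partial>measure_pmf (iid_list d (surfer_target p H))) \<partial>measure_pmf (webgraph_steps d p s))"
    by simp
  also have "\<dots> \<le> (\<integral>\<^sup>+H. ennreal ((1 + 2 / (real s + 1)) * root_potential z H)
      \<partial>measure_pmf (webgraph_steps d p s))"
  proof (intro nn_integral_mono_AE, unfold AE_measure_pmf_iff, intro ballI)
    fix H assume "H \<in> set_pmf (webgraph_steps d p s)"
    with is_webgraph_webgraph_steps[OF assms(1)] have "is_webgraph d H" "length H = Suc s" by auto
    from nn_integral_root_potential_append[OF this(1) assms(1-3) z(1,2)] this(2)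
    show "(\<integral>\<^sup>+es. ennreal (root_potential z (H @ [es])) \<partial>measure_pmf (iid_list d (surfer_target p H)))
        \<le> ennreal ((1 + 2 / (real s + 1)) * root_potential z H)"
      unfolding z(3) by (simp add: add.commute)
  qed
  also have "\<dots> = ennreal (1 + 2 / (real s + 1)) *
      (\<integral>\<^sup>+H. ennreal (root_potential z H) \<partial>measure_pmf (webgraph_steps d p s))"
    using z(1) by (simp add: ennreal_mult nn_integral_cmult root_potential_nonneg)
  finally show ?thesis .
qed

lemma nn_integral_root_potential_webgraph_steps:
  assumes "0 < d" "0 < p" "p \<le> 1"
  shows "(\<integral>\<^sup>+G. ennreal (root_potential (2 / (2 - p)) G) \<partial>measure_pmf (webgraph_steps d p s))
          \<le> ennreal ((real s + 1) * (real s + 2) / 2)"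
proof (induction s)
  case 0
  have "depth [replicate d 0] 0 = 0" by (intro le_0_eq[THEN iffD1] udist_le) simp
  then show ?case by (simp add: root_potential_def)
next
  case (Suc s)
  have "(\<integral>\<^sup>+G. ennreal (root_potential (2 / (2 - p)) G) \<partial>measure_pmf (webgraph_steps d p (Suc s)))
      \<le> ennreal (1 + 2 / (real s + 1)) *
        (\<integral>\<^sup>+G. ennreal (root_potential (2 / (2 - p)) G) \<partial>measure_pmf (webgraph_steps d p s))"
    by (rule nn_integral_root_potential_webgraph_steps_Suc[OF assms])
  also have "\<dots> \<le> ennreal (1 + 2 / (real s + 1)) * ennreal ((real s + 1) * (real s + 2) / 2)"
    using Suc.IH by (rule mult_left_mono) simp
  also have "\<dots> = ennreal ((real (Suc s) + 1) * (real (Suc s) + 2) / 2)"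
  proof -
    have "(1 + 2 / (real s + 1)) * ((real s + 1) * (real s + 2) / 2)
        = (real (Suc s) + 1) * (real (Suc s) + 2) / 2"
      by (simp add: field_simps)
    then show ?thesis by (subst ennreal_mult[symmetric]) auto
  qed
  finally show ?case .
qed

subsection \<open>The tail bound\<close>

lemma pmf_Markov_inequality:
  fixes M :: "'a pmf"
  assumes "(\<integral>\<^sup>+x. ennreal (f x) \<partial>measure_pmf M) \<le> ennreal B" "0 < c" "0 \<le> B"
  shows "measure_pmf.prob M {x. c \<le> f x} \<le> B / c"
proof -
  let ?A = "{x. c \<le> f x}"
  have "ennreal c * emeasure (measure_pmf M) ?A = (\<integral>\<^sup>+x. ennreal c * indicator ?A x \<partial>measure_pmf M)"
    by (simp add: nn_integral_cmult_indicator)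
  also have "\<dots> \<le> (\<integral>\<^sup>+x. ennreal (f x) \<partial>measure_pmf M)"
    by (intro nn_integral_mono) (auto split: split_indicator intro: ennreal_leI)
  also have "\<dots> \<le> ennreal B" by fact
  finally have "ennreal (c * measure_pmf.prob M ?A) \<le> ennreal B"
    using assms(2) by (simp add: measure_pmf.emeasure_eq_measure ennreal_mult)
  then have "c * measure_pmf.prob M ?A \<le> B" using assms(3) by (simp add: ennreal_le_iff)
  then show ?thesis using assms(2) by (simp add: field_simps mult.commute)
qed

lemma ln_two_div_two_minus_ge:
  fixes p :: real
  assumes "0 \<le> p" "p < 2"
  shows "p / 2 \<le> ln (2 / (2 - p))"
proof -
  have "ln ((2 - p) / 2) \<le> (2 - p) / 2 - 1" using assms by (intro ln_le_minus_one) auto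
  moreover have "ln (2 / (2 - p)) = - ln ((2 - p) / 2)" using assms by (simp add: ln_div)
  ultimately show ?thesis by argo
qed

lemma prob_depth_gt_le:
  assumes "0 < d" "0 < p" "p \<le> 1" "2 \<le> n"
  shows "measure_pmf.prob (webgraph d p n)
     {G. \<exists>v<length G. 4 * exp p * ln (real n) / p < real (depth G v)} \<le> real n powr (2 - 2 * exp p)"
proof -
  define z where "z = 2 / (2 - p)"
  define R where "R = 4 * exp p * ln (real n) / p"
  define c where "c = z powr R"
  have z: "1 \<le> z" using assms(2,3) by (simp add: z_def)
  have "0 \<le> R" using assms by (simp add: R_def)
  have "{G. \<exists>v<length G. R < real (depth G v)} \<subseteq> {G. c \<le> root_potential z G}"
  proof safe
    fix G v assume "v < length G" "R < real (depth G v)"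
    then have "c \<le> z powr real (depth G v)" unfolding c_def using z by (intro powr_mono) auto
    also have "\<dots> = z ^ depth G v" using z by (simp add: powr_realpow)
    also have "\<dots> \<le> root_potential z G" unfolding root_potential_def
      using \<open>v < length G\<close> z by (intro member_le_sum) auto
    finally show "c \<le> root_potential z G" .
  qed
  then have "measure_pmf.prob (webgraph d p n) {G. \<exists>v<length G. R < real (depth G v)}
      \<le> measure_pmf.prob (webgraph d p n) {G. c \<le> root_potential z G}"
    by (intro measure_pmf.finite_measure_mono) auto
  also have "\<dots> \<le> (real n * (real n + 1) / 2) / c"
  proof (rule pmf_Markov_inequality)
    show "(\<integral>\<^sup>+G. ennreal (root_potential z G) \<partial>measure_pmf (webgraph d p n))
        \<le> ennreal (real n * (real n + 1) / 2)"
      using nn_integral_root_potential_webgraph_steps[OF assms(1-3), of "n - 1"] assms(4)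
      by (simp add: webgraph_def z_def of_nat_diff ac_simps)
  qed (use z in \<open>auto simp: c_def\<close>)
  also have "\<dots> \<le> real n powr 2 / real n powr (2 * exp p)"
  proof (rule frac_le)
    have "real n * (real n + 1) / 2 \<le> real n ^ 2" using assms(4) by (simp add: power2_eq_square)
    then show "real n * (real n + 1) / 2 \<le> real n powr 2" using assms(4) by (simp add: powr_realpow)
    have "real n powr (2 * exp p) = exp (p / 2 * R)"
      using assms(2,4) by (simp add: powr_def R_def)
    also have "\<dots> \<le> exp (ln z * R)"
      using mult_right_mono[OF ln_two_div_two_minus_ge[of p] \<open>0 \<le> R\<close>] assms(2,3)
      by (simp add: z_def)
    also have "\<dots> = c" using z by (simp add: c_def powr_def)
    finally show "real n powr (2 * exp p) \<le> c" .
  qed (use assms(4) in auto)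
  also have "\<dots> = real n powr (2 - 2 * exp p)" by (simp add: powr_diff)
  finally show ?thesis unfolding R_def .
qed

lemma prob_diameter_le_ge:
  assumes "0 < d" "0 < p" "p \<le> 1" "2 \<le> n"
  shows "1 - real n powr (2 - 2 * exp p)
    \<le> measure_pmf.prob (webgraph d p n) {G. real (diameter G) \<le> 8 * exp p * ln (real n) / p}"
proof -
  let ?M = "webgraph d p n" and ?R = "4 * exp p * ln (real n) / p"
  let ?far = "{G. \<exists>v<length G. ?R < real (depth G v)}"
  have "AE G in measure_pmf ?M. G \<in> - ?far \<longrightarrow> real (diameter G) \<le> 8 * exp p * ln (real n) / p"
  proof (unfold AE_measure_pmf_iff, intro ballI impI)
    fix G assume "G \<in> set_pmf ?M" "G \<in> - ?far"
    then have "is_webgraph d G" "\<And>v. v < length G \<Longrightarrow> real (depth G v) \<le> ?R"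
      using is_webgraph_webgraph_steps[OF assms(1)] unfolding webgraph_def by (blast, force)
    from diameter_le_twice_depth[OF this(1) assms(1) this(2)]
    show "real (diameter G) \<le> 8 * exp p * ln (real n) / p" by simp
  qed
  then have "measure_pmf.prob ?M (- ?far)
      \<le> measure_pmf.prob ?M {G. real (diameter G) \<le> 8 * exp p * ln (real n) / p}"
    by (intro measure_pmf.finite_measure_mono_AE) auto
  moreover have "measure_pmf.prob ?M (- ?far) = 1 - measure_pmf.prob ?M ?far"
    using measure_pmf.prob_compl[of ?far ?M] by (simp add: Compl_eq_Diff_UNIV)
  ultimately show ?thesis using prob_depth_gt_le[OF assms] by linarith
qed

theorem theorem1:
  fixes d :: nat and p :: real
  assumes "0 < d" and "0 < p" and "p \<le> 1"
  shows "(\<lambda>n. measure_pmf.prob (webgraph d p n)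
            {G. real (diameter G) \<le> 8 * exp p * ln (real n) / p}) \<longlonglongrightarrow> 1"
proof (rule tendsto_sandwich[of "\<lambda>n. 1 - real n powr (2 - 2 * exp p)" _ _ "\<lambda>n. 1"])
  have "(\<lambda>n. real n powr (2 - 2 * exp p)) \<longlonglongrightarrow> 0"
    using assms(2) by (intro tendsto_neg_powr filterlim_real_sequentially) simp
  then show "(\<lambda>n. 1 - real n powr (2 - 2 * exp p)) \<longlonglongrightarrow> 1"
    using tendsto_diff[OF tendsto_const] by fastforce
  show "\<forall>\<^sub>F n in sequentially. 1 - real n powr (2 - 2 * exp p)
      \<le> measure_pmf.prob (webgraph d p n) {G. real (diameter G) \<le> 8 * exp p * ln (real n) / p}"
    using eventually_ge_at_top[of 2] by eventually_elim (rule prob_diameter_le_ge[OF assms])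
qed (simp_all add: measure_pmf.prob_le_1)

end
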